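(* Let $u \in \mathbb{R}^m$, let $T$ be a finite set of vectors in $\mathbb{R}^m$, and let $S = \{v_1, \dots, v_k\}$ be a set of unit vectors in $\mathbb{R}^m$ with $f_u(S) \ge f_u(T)$ and $f_u(S) > 0$. Then $$\sum_{i=1}^k \big(f_u(T \cup \{v_i\}) - f_u(T)\big) \ge \sigma_{\min}(S)\, \frac{\big(f_u(S) - f_u(T)\big)^2}{4 f_u(S)}.$$
   Context: For a finite set $V$ of vectors in $\mathbb{R}^m$, $\Pi_V$ denotes the orthogonal projector onto $\mathrm{span}(V)$, and for $u \in \mathbb{R}^m$, $f_u(V) = \|\Pi_V u\|_2^2$. For a finite set $V$ of unit vectors, $\sigma_{\min}(V)$ is the smallest squared singular value of the matrix with columns $V$, i.e. $\inf_{\|x\|_2 = 1} \|Mx\|_2^2$ for that matrix $M$. *)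

theory Defs
  imports "HOL-Analysis.Analysis"
begin

definition proj_span :: "'a::euclidean_space set \<Rightarrow> 'a \<Rightarrow> 'a" where
  "proj_span V u = (THE p. p \<in> span V \<and> (\<forall>w\<in>span V. (u - p) \<bullet> w = 0))"

definition f_val :: "'a::euclidean_space \<Rightarrow> 'a set \<Rightarrow> real" where
  "f_val u V = (norm (proj_span V u))\<^sup>2"

text \<open>Smallest squared singular value of the matrix whose columns are the elements of V
  (columns indexed by V itself; coefficient vectors x restricted to V).\<close>
definition sigma_min :: "'a::euclidean_space set \<Rightarrow> real" where
  "sigma_min V = Inf {(norm (\<Sum>v\<in>V. x v *\<^sub>R v))\<^sup>2 | x. (\<Sum>v\<in>V. (x v)\<^sup>2) = 1}"

end

theory Submission
  imports Defs
begin

text \<open>Let \<open>p\<close>, \<open>q\<close> be the projections of \<open>u\<close> onto \<open>span T\<close>, \<open>span S\<close> and \<open>r = u - p\<close>.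
  Adding a unit vector \<open>v\<close> to \<open>T\<close> gains at least \<open>(r \<bullet> v)\<^sup>2\<close>. Writing \<open>q = \<Sum> x\<^sub>v v\<close>,
  Cauchy-Schwarz and the definition of \<open>\<sigma>\<^sub>m\<^sub>i\<^sub>n\<close> give
  \<open>\<sigma>\<^sub>m\<^sub>i\<^sub>n(S) (r \<bullet> q)\<^sup>2 \<le> \<parallel>q\<parallel>\<^sup>2 \<Sum> (r \<bullet> v)\<^sup>2\<close>, while \<open>\<parallel>p - q\<parallel>\<^sup>2 \<ge> 0\<close> yields
  \<open>r \<bullet> q \<ge> (\<parallel>q\<parallel>\<^sup>2 - \<parallel>p\<parallel>\<^sup>2) / 2\<close>.\<close>

lemma proj_span_characterization:
  "proj_span V u \<in> span V \<and> (\<forall>w\<in>span V. (u - proj_span V u) \<bullet> w = 0)"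
proof -
  obtain y z where y: "y \<in> span V" and z: "\<And>w. w \<in> span V \<Longrightarrow> orthogonal z w"
    and u: "u = y + z"
    using orthogonal_subspace_decomp_exists by blast
  have y_proj: "y \<in> span V \<and> (\<forall>w\<in>span V. (u - y) \<bullet> w = 0)"
    using y z u by (simp add: orthogonal_def)
  have unique: "p = y" if p: "p \<in> span V \<and> (\<forall>w\<in>span V. (u - p) \<bullet> w = 0)" for p
  proof -
    have "p - y \<in> span V" using p y span_diff by blast
    then have "(u - p) \<bullet> (p - y) = 0" "(u - y) \<bullet> (p - y) = 0" using p y_proj by auto
    then have "(p - y) \<bullet> (p - y) = 0" by (simp add: inner_diff_left)
    then show ?thesis by simp
  qed
  have "proj_span V u = y"
    unfolding proj_span_def using y_proj unique by (rule the_equality)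
  then show ?thesis using y_proj by simp
qed

lemma proj_span_in_span: "proj_span V u \<in> span V"
  using proj_span_characterization by blast

lemma proj_span_orthogonal: "w \<in> span V \<Longrightarrow> (u - proj_span V u) \<bullet> w = 0"
  using proj_span_characterization by blast

lemma f_val_eq_inner_proj_span: "f_val u V = u \<bullet> proj_span V u"
proof -
  have "(u - proj_span V u) \<bullet> proj_span V u = 0"
    by (rule proj_span_orthogonal[OF proj_span_in_span])
  then show ?thesis by (simp add: f_val_def inner_diff_left power2_norm_eq_inner)
qed

lemma f_val_eq_norm_proj_span_diff:
  assumes "span T \<subseteq> span T'"
  shows "f_val u T' = f_val u T + (norm (proj_span T' u - proj_span T u))\<^sup>2"
proof -
  define p p' where "p = proj_span T u" and "p' = proj_span T' u"
  have "p \<in> span T'" using assms proj_span_in_span p_def by blast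
  then have "(u - p') \<bullet> p = 0" "(u - p) \<bullet> p = 0"
    using proj_span_orthogonal[OF proj_span_in_span] proj_span_orthogonal p_def p'_def
    by auto
  moreover have "p' - p = (u - p) - (u - p')" by simp
  ultimately have "(p' - p) \<bullet> p = 0" by (simp only: inner_diff_left)
  then have "(norm p')\<^sup>2 = (norm (p' - p))\<^sup>2 + (norm p)\<^sup>2"
    using norm_add_Pythagorean[of "p' - p" p] by (simp add: orthogonal_def)
  then show ?thesis by (simp add: f_val_def p_def p'_def)
qed

lemma f_val_insert_gain:
  assumes "norm v = 1"
  shows "((u - proj_span T u) \<bullet> v)\<^sup>2 \<le> f_val u (T \<union> {v}) - f_val u T"
proof -
  define p p' where "p = proj_span T u" and "p' = proj_span (T \<union> {v}) u"
  have "(u - p') \<bullet> v = 0"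
    using proj_span_orthogonal[of v "T \<union> {v}" u] by (simp add: p'_def span_base)
  moreover have "u - p = (p' - p) + (u - p')" by simp
  ultimately have "(u - p) \<bullet> v = (p' - p) \<bullet> v" by (simp only: inner_add_left)
  then have "\<bar>(u - p) \<bullet> v\<bar> \<le> norm (p' - p)"
    using Cauchy_Schwarz_ineq2[of "p' - p" v] assms by simp
  then have "((u - p) \<bullet> v)\<^sup>2 \<le> (norm (p' - p))\<^sup>2"
    by (metis abs_ge_zero power2_abs power_mono)
  moreover have "f_val u (T \<union> {v}) - f_val u T = (norm (p' - p))\<^sup>2"
    using f_val_eq_norm_proj_span_diff[OF span_mono, of T "T \<union> {v}" u]
    by (simp add: p_def p'_def subset_insertI)
  ultimately show ?thesis by (simp add: p_def)
qed

lemma sigma_min_le: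
  assumes "finite S"
  shows "sigma_min S * (\<Sum>v\<in>S. (x v)\<^sup>2) \<le> (norm (\<Sum>v\<in>S. x v *\<^sub>R v))\<^sup>2"
proof (cases "(\<Sum>v\<in>S. (x v)\<^sup>2) = 0")
  case False
  define s where "s = (\<Sum>v\<in>S. (x v)\<^sup>2)"
  have s_pos: "s > 0" using False s_def by (metis sum_nonneg zero_le_power2 order_le_less)
  define y where "y v = x v / sqrt s" for v
  have "(\<Sum>v\<in>S. (y v)\<^sup>2) = 1"
    using s_pos by (simp add: y_def power_divide flip: sum_divide_distrib s_def)
  then have "sigma_min S \<le> (norm (\<Sum>v\<in>S. y v *\<^sub>R v))\<^sup>2"
    unfolding sigma_min_def by (intro cInf_lower bdd_belowI[of _ 0]) auto
  also have "(\<Sum>v\<in>S. y v *\<^sub>R v) = (1 / sqrt s) *\<^sub>R (\<Sum>v\<in>S. x v *\<^sub>R v)"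
    by (simp add: y_def scaleR_sum_right divide_inverse_commute)
  also have "(norm \<dots>)\<^sup>2 = (norm (\<Sum>v\<in>S. x v *\<^sub>R v))\<^sup>2 / s"
    using s_pos by (simp add: power_divide)
  finally show ?thesis using s_pos s_def by (simp add: pos_le_divide_eq)
qed simp

lemma sigma_min_nonneg:
  assumes "finite S" "S \<noteq> {}"
  shows "0 \<le> sigma_min S"
proof -
  obtain v0 where v0: "v0 \<in> S" using assms by blast
  define x0 where "x0 v = (if v = v0 then 1 else 0 :: real)" for v
  have "(\<Sum>v\<in>S. (x0 v)\<^sup>2) = (\<Sum>v\<in>S. if v = v0 then 1 else 0)"
    by (rule sum.cong) (auto simp: x0_def)
  also have "\<dots> = 1" using assms(1) v0 by simp
  finally have "{(norm (\<Sum>v\<in>S. x v *\<^sub>R v))\<^sup>2 | x. (\<Sum>v\<in>S. (x v)\<^sup>2) = 1} \<noteq> {}"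
    by blast
  then show ?thesis unfolding sigma_min_def by (rule cInf_greatest) auto
qed

lemma sigma_min_inner_le:
  assumes "finite S" "S \<noteq> {}" "q \<in> span S"
  shows "sigma_min S * (w \<bullet> q)\<^sup>2 \<le> (norm q)\<^sup>2 * (\<Sum>v\<in>S. (w \<bullet> v)\<^sup>2)"
proof -
  obtain x where q: "q = (\<Sum>v\<in>S. x v *\<^sub>R v)"
    using assms(3) span_finite[OF assms(1)] by auto
  have "(w \<bullet> q)\<^sup>2 \<le> (\<Sum>v\<in>S. (x v)\<^sup>2) * (\<Sum>v\<in>S. (w \<bullet> v)\<^sup>2)"
    unfolding q inner_sum_right inner_scaleR_right by (rule Cauchy_Schwarz_ineq_sum)
  then have "sigma_min S * (w \<bullet> q)\<^sup>2
      \<le> (sigma_min S * (\<Sum>v\<in>S. (x v)\<^sup>2)) * (\<Sum>v\<in>S. (w \<bullet> v)\<^sup>2)"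
    using sigma_min_nonneg[OF assms(1,2)] by (simp add: mult_left_mono mult.assoc)
  also have "\<dots> \<le> (norm q)\<^sup>2 * (\<Sum>v\<in>S. (w \<bullet> v)\<^sup>2)"
    using sigma_min_le[OF assms(1)] q by (intro mult_right_mono sum_nonneg) auto
  finally show ?thesis .
qed

lemma f_val_diff_le_inner_residual:
  "(f_val u S - f_val u T) / 2 \<le> (u - proj_span T u) \<bullet> proj_span S u"
proof -
  define p q where "p = proj_span T u" and "q = proj_span S u"
  have "0 \<le> (norm (p - q))\<^sup>2" by simp
  also have "\<dots> = f_val u T + f_val u S - 2 * (p \<bullet> q)"
    by (simp add: p_def q_def f_val_def power2_norm_eq_inner inner_diff_left
        inner_diff_right inner_commute)
  finally show ?thesis
    using f_val_eq_inner_proj_span[of u S] by (simp add: p_def q_def inner_diff_left)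
qed

theorem lemma2:
  fixes u :: "'a::euclidean_space" and T S :: "'a set"
  assumes "finite T" and "finite S"
    and "\<forall>v\<in>S. norm v = 1"
    and "f_val u S \<ge> f_val u T"
    and "f_val u S > 0"
  shows "(\<Sum>v\<in>S. f_val u (T \<union> {v}) - f_val u T)
           \<ge> sigma_min S * (f_val u S - f_val u T)\<^sup>2 / (4 * f_val u S)"
proof -
  define r where "r = u - proj_span T u"
  define F G where "F = f_val u S" and "G = f_val u T"
  define A where "A = (\<Sum>v\<in>S. (r \<bullet> v)\<^sup>2)"
  have gain: "A \<le> (\<Sum>v\<in>S. f_val u (T \<union> {v}) - f_val u T)"
    unfolding A_def r_def using assms(3) by (intro sum_mono f_val_insert_gain) simp
  have "S \<noteq> {}"
    using assms(5) proj_span_in_span[of "{}" u] by (auto simp: f_val_def)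
  then have sigma: "0 \<le> sigma_min S" "sigma_min S * (r \<bullet> proj_span S u)\<^sup>2 \<le> F * A"
    using sigma_min_nonneg[OF assms(2)] sigma_min_inner_le[OF assms(2) _ proj_span_in_span]
    by (simp_all add: A_def F_def f_val_def)
  have "((F - G) / 2)\<^sup>2 \<le> (r \<bullet> proj_span S u)\<^sup>2"
    using f_val_diff_le_inner_residual[of u S T] assms(4)
    by (intro power_mono) (auto simp: F_def G_def r_def)
  with sigma have "sigma_min S * ((F - G) / 2)\<^sup>2 \<le> F * A"
    by (meson mult_left_mono order_trans)
  then have "sigma_min S * (F - G)\<^sup>2 / (4 * F) \<le> A"
    using assms(5) by (simp add: F_def pos_divide_le_eq power_divide mult.commute)
  then show ?thesis using gain F_def G_def by simp
qed

end
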